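(* Let $\mathbb{P}(1:3:5)=\mathrm{Proj}\,\mathbb{C}[\mathfrak{A},\mathfrak{B},\mathfrak{C}]$ (weights $1,3,5$) and $\mathbb{P}(2:3:5:6)=\mathrm{Proj}\,\mathbb{C}[\alpha,\beta,\gamma,\delta]$ (weights $2,3,5,6$). A point $(\alpha:\beta:\gamma:\delta)\in\mathbb{P}(2:3:5:6)$ satisfies the modular equation $$(-\alpha^3-\beta^2+\delta)^2-4\alpha(\alpha\beta-\gamma)^2=0$$ if and only if it lies in the image of the embedding $\Psi_5:\mathbb{P}(1:3:5)\to\mathbb{P}(2:3:5:6)$ given by $$(\mathfrak{A}:\mathfrak{B}:\mathfrak{C})\mapsto\Big(\tfrac{25}{36}\mathfrak{A}^2:\ \tfrac12\big(-\tfrac{125}{108}\mathfrak{A}^3+\tfrac54\mathfrak{B}\big):\ \tfrac1{32}\mathfrak{C}:\ \tfrac{25}{64}\mathfrak{B}^2-\tfrac5{96}\mathfrak{A}\mathfrak{C}\Big).$$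
   Context: Here $\mathfrak{A},\mathfrak{B},\mathfrak{C}$ are coordinates (coming from Klein's icosahedral invariants) on the weighted projective plane $\mathbb{P}(1:3:5)$, which is the compactification (by one cusp $(1:0:0)$) of the symmetric Hilbert modular surface for $\mathbb{Q}(\sqrt5)$. The point $(\alpha:\beta:\gamma:\delta)$ parametrizes the elliptic K3 surface $y^2=x^3+(-3\alpha t^4-\gamma t^5)x+(t^5-2\beta t^6+\delta t^7)$; the given modular equation is the condition for this surface to admit an extra section making its Néron–Severi lattice $E_8(-1)\oplus E_8(-1)\oplus\begin{pmatrix}2&1\\1&-2\end{pmatrix}$. *)

theory Defs
  imports Complex_Main
begin

text \<open>Points of the weighted projective space P(2:3:5:6) over C are represented by
nonzero tuples in C^4; two tuples represent the same point iff they differ by the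
weighted scaling (a,b,c,d) ~ (l^2 a, l^3 b, l^5 c, l^6 d) with l nonzero.\<close>

definition wproj_eq_2356 ::
  "complex \<times> complex \<times> complex \<times> complex \<Rightarrow> complex \<times> complex \<times> complex \<times> complex \<Rightarrow> bool" where
  "wproj_eq_2356 p q = (case p of (a,b,c,d) \<Rightarrow> case q of (a',b',c',d') \<Rightarrow>
     (\<exists>l::complex. l \<noteq> 0 \<and> a' = l^2 * a \<and> b' = l^3 * b \<and> c' = l^5 * c \<and> d' = l^6 * d))"

definition Psi5 :: "complex \<times> complex \<times> complex \<Rightarrow> complex \<times> complex \<times> complex \<times> complex" where
  "Psi5 = (\<lambda>(A,B,C). (25/36 * A^2,
                      1/2 * (- (125/108) * A^3 + 5/4 * B),
                      1/32 * C,
                      25/64 * B^2 - 5/96 * A * C))"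

definition modular_eq :: "complex \<Rightarrow> complex \<Rightarrow> complex \<Rightarrow> complex \<Rightarrow> bool" where
  "modular_eq a b c d \<longleftrightarrow> (- (a^3) - b^2 + d)^2 - 4 * a * (a * b - c)^2 = 0"

end

theory Submission
  imports Defs
begin

text \<open>Writing \<open>a = s\<^sup>2\<close>, the modular equation is a difference of two squares, so it cuts
out the graph \<open>d = a\<^sup>3 + b\<^sup>2 + 2 s (a b - c)\<close>, with both signs of \<open>s\<close> allowed. This graph is
parametrised by \<open>(s, b, c)\<close>, and \<open>\<Psi>\<^sub>5\<close> is that parametrisation after the linear change of
variables \<open>s = 5/6 A\<close>, \<open>b = -125/216 A\<^sup>3 + 5/8 B\<close>, \<open>c = C/32\<close>. Since the equation is weighted
homogeneous of degree 12, the affine statement passes to the weighted projective one.\<close>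

lemma modular_eq_iff_sqrt:
  "modular_eq a b c d \<longleftrightarrow> (\<exists>s. s\<^sup>2 = a \<and> d = a^3 + b\<^sup>2 + 2 * s * (a * b - c))"
proof
  assume "modular_eq a b c d"
  then have "(- (a^3) - b\<^sup>2 + d)\<^sup>2 = (2 * csqrt a * (a * b - c))\<^sup>2"
    unfolding modular_eq_def by (simp add: power_mult_distrib)
  then obtain s where "s = csqrt a \<or> s = - csqrt a"
    and "- (a^3) - b\<^sup>2 + d = 2 * s * (a * b - c)"
    by (metis (no_types) power2_eq_iff mult_minus_left mult_minus_right)
  then have "s\<^sup>2 = a" and "d = a^3 + b\<^sup>2 + 2 * s * (a * b - c)"
    by (auto simp: algebra_simps)
  then show "\<exists>s. s\<^sup>2 = a \<and> d = a^3 + b\<^sup>2 + 2 * s * (a * b - c)"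
    by blast
next
  assume "\<exists>s. s\<^sup>2 = a \<and> d = a^3 + b\<^sup>2 + 2 * s * (a * b - c)"
  then obtain s where "a = s\<^sup>2" "d = a^3 + b\<^sup>2 + 2 * s * (a * b - c)" by auto
  then show "modular_eq a b c d"
    unfolding modular_eq_def by (simp add: power_mult_distrib)
qed

lemma modular_eq_weighted_scale:
  assumes "l \<noteq> 0"
  shows "modular_eq (l^2 * a) (l^3 * b) (l^5 * c) (l^6 * d) \<longleftrightarrow> modular_eq a b c d"
proof -
  have "(- ((l^2 * a)^3) - (l^3 * b)\<^sup>2 + l^6 * d)\<^sup>2 - 4 * (l^2 * a) * ((l^2 * a) * (l^3 * b) - l^5 * c)\<^sup>2
      = l^12 * ((- (a^3) - b\<^sup>2 + d)\<^sup>2 - 4 * a * (a * b - c)\<^sup>2)"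
    by algebra
  with assms show ?thesis
    unfolding modular_eq_def by simp
qed

lemma modular_eq_iff_in_range_Psi5:
  "modular_eq a b c d \<longleftrightarrow> (a, b, c, d) \<in> range Psi5"
proof
  assume "modular_eq a b c d"
  then obtain s where s: "s\<^sup>2 = a" and d: "d = a^3 + b\<^sup>2 + 2 * s * (a * b - c)"
    by (auto simp: modular_eq_iff_sqrt)
  define A where "A = 6/5 * s"
  define B where "B = 8/5 * (b + 125/216 * A^3)"
  define C where "C = 32 * c"
  have "Psi5 (A, B, C) = (a, b, c, d)"
    using s unfolding d Psi5_def A_def B_def C_def
    by (simp add: field_simps power2_eq_square power3_eq_cube)
  then show "(a, b, c, d) \<in> range Psi5"
    by (metis rangeI)
next
  assume "(a, b, c, d) \<in> range Psi5"
  then obtain A B C where "(a, b, c, d) = Psi5 (A, B, C)"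
    by auto
  then have Psi5_coords: "a = 25/36 * A\<^sup>2" "b = 1/2 * (- (125/108) * A^3 + 5/4 * B)" "c = 1/32 * C"
    "d = 25/64 * B\<^sup>2 - 5/96 * A * C"
    by (simp_all add: Psi5_def)
  have "(5/6 * A)\<^sup>2 = a \<and> d = a^3 + b\<^sup>2 + 2 * (5/6 * A) * (a * b - c)"
    unfolding Psi5_coords by (simp add: field_simps power2_eq_square power3_eq_cube)
  then show "modular_eq a b c d"
    by (auto simp: modular_eq_iff_sqrt)
qed

lemma wproj_eq_2356_refl: "wproj_eq_2356 p p"
  unfolding wproj_eq_2356_def by (auto intro!: exI[of _ 1])

theorem mainTheorem1:
  fixes a b c d :: complex
  assumes "(a, b, c, d) \<noteq> (0, 0, 0, 0)"
  shows "modular_eq a b c d \<longleftrightarrow>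
    (\<exists>A B C :: complex. (A, B, C) \<noteq> (0, 0, 0) \<and>
        wproj_eq_2356 (Psi5 (A, B, C)) (a, b, c, d))"
proof
  assume "modular_eq a b c d"
  then obtain A B C where abcd: "Psi5 (A, B, C) = (a, b, c, d)"
    by (auto simp: modular_eq_iff_in_range_Psi5)
  moreover have "Psi5 (0, 0, 0) = (0, 0, 0, 0)"
    by (simp add: Psi5_def)
  ultimately have "(A, B, C) \<noteq> (0, 0, 0)"
    using assms by auto
  with abcd wproj_eq_2356_refl show "\<exists>A B C. (A, B, C) \<noteq> (0, 0, 0) \<and>
      wproj_eq_2356 (Psi5 (A, B, C)) (a, b, c, d)" by metis
next
  assume "\<exists>A B C. (A, B, C) \<noteq> (0, 0, 0) \<and> wproj_eq_2356 (Psi5 (A, B, C)) (a, b, c, d)"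
  then obtain A B C where "wproj_eq_2356 (Psi5 (A, B, C)) (a, b, c, d)"
    by blast
  moreover obtain a0 b0 c0 d0 where psi: "Psi5 (A, B, C) = (a0, b0, c0, d0)"
    by (metis prod_cases4)
  ultimately obtain l where "l \<noteq> 0"
    and "a = l^2 * a0" "b = l^3 * b0" "c = l^5 * c0" "d = l^6 * d0"
    unfolding wproj_eq_2356_def by auto
  moreover have "modular_eq a0 b0 c0 d0"
    using psi by (metis modular_eq_iff_in_range_Psi5 rangeI)
  ultimately show "modular_eq a b c d"
    by (simp add: modular_eq_weighted_scale)
qed

end
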